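(* Let $\mathcal P$ be a convex family of probability measures on a measurable space $(\Omega,\mathcal F)$ and let $x'\in\mathrm{ca}(\mathcal P)'$. Suppose there exists an $\mathcal F$-measurable function $h$ with $x'(\mu)=\int h\,d\mu$ for all $\mu\in\mathrm{ca}(\mathcal P)$. Then $h$ is unique up to $\mathcal P$-q.s. equality and $h\in\mathbb L^\infty(\mathcal P)$.
   Context: $\mathrm{ca}(\mathcal P)$ is the normed space of finite signed measures $\mu$ on $\mathcal F$ with $|\mu|\ll P$ for some $P\in\mathcal P$, with the total variation norm; $\mathrm{ca}(\mathcal P)'$ is its dual. A set is $\mathcal P$-polar if contained in some $N\in\mathcal F$ with $P(N)=0$ for all $P\in\mathcal P$; $\mathcal P$-q.s. means outside a polar set. $\mathbb L^\infty(\mathcal P)$ is the space of measurable functions bounded $\mathcal P$-q.s., modulo $\mathcal P$-q.s. equality. *)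

theory Defs
  imports "HOL-Probability.Probability"
begin

definition finite_signed_measure :: "'a measure \<Rightarrow> ('a set \<Rightarrow> real) \<Rightarrow> bool" where
  "finite_signed_measure M \<mu> \<longleftrightarrow>
     \<mu> {} = 0 \<and> (\<forall>A. A \<notin> sets M \<longrightarrow> \<mu> A = 0) \<and>
     (\<forall>A :: nat \<Rightarrow> 'a set. range A \<subseteq> sets M \<longrightarrow> disjoint_family A \<longrightarrow>
        (\<lambda>i. \<mu> (A i)) sums \<mu> (\<Union>i. A i))"

definition tv :: "'a measure \<Rightarrow> ('a set \<Rightarrow> real) \<Rightarrow> 'a set \<Rightarrow> real" where
  "tv M \<mu> A = Sup {(\<Sum>B\<in>C. \<bar>\<mu> B\<bar>) | C. finite C \<and> C \<subseteq> sets M \<and> disjoint C \<and> \<Union>C \<subseteq> A}"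

definition tv_norm :: "'a measure \<Rightarrow> ('a set \<Rightarrow> real) \<Rightarrow> real" where
  "tv_norm M \<mu> = tv M \<mu> (space M)"

definition pos_part :: "'a measure \<Rightarrow> ('a set \<Rightarrow> real) \<Rightarrow> 'a measure" where
  "pos_part M \<mu> = measure_of (space M) (sets M) (\<lambda>A. ennreal ((tv M \<mu> A + \<mu> A) / 2))"

definition neg_part :: "'a measure \<Rightarrow> ('a set \<Rightarrow> real) \<Rightarrow> 'a measure" where
  "neg_part M \<mu> = measure_of (space M) (sets M) (\<lambda>A. ennreal ((tv M \<mu> A - \<mu> A) / 2))"

definition signed_integrable :: "'a measure \<Rightarrow> ('a set \<Rightarrow> real) \<Rightarrow> ('a \<Rightarrow> real) \<Rightarrow> bool" where
  "signed_integrable M \<mu> h \<longleftrightarrow> integrable (pos_part M \<mu>) h \<and> integrable (neg_part M \<mu>) h"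

definition signed_integral :: "'a measure \<Rightarrow> ('a set \<Rightarrow> real) \<Rightarrow> ('a \<Rightarrow> real) \<Rightarrow> real" where
  "signed_integral M \<mu> h = integral\<^sup>L (pos_part M \<mu>) h - integral\<^sup>L (neg_part M \<mu>) h"

definition convex_prob_family :: "'a measure \<Rightarrow> 'a measure set \<Rightarrow> bool" where
  "convex_prob_family M \<P> \<longleftrightarrow>
     (\<forall>P\<in>\<P>. prob_space P \<and> sets P = sets M) \<and>
     (\<forall>P\<in>\<P>. \<forall>Q\<in>\<P>. \<forall>t::real. 0 \<le> t \<and> t \<le> 1 \<longrightarrow>
        measure_of (space M) (sets M) (\<lambda>A. ennreal t * emeasure P A + ennreal (1 - t) * emeasure Q A) \<in> \<P>)"

definition ca :: "'a measure \<Rightarrow> 'a measure set \<Rightarrow> ('a set \<Rightarrow> real) set" where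
  "ca M \<P> = {\<mu>. finite_signed_measure M \<mu> \<and>
     (\<exists>P\<in>\<P>. \<forall>A\<in>sets M. emeasure P A = 0 \<longrightarrow> tv M \<mu> A = 0)}"

definition ca_dual :: "'a measure \<Rightarrow> 'a measure set \<Rightarrow> (('a set \<Rightarrow> real) \<Rightarrow> real) set" where
  "ca_dual M \<P> = {x. (\<forall>\<mu>\<in>ca M \<P>. \<forall>\<nu>\<in>ca M \<P>. \<forall>a b::real.
        x (\<lambda>A. a * \<mu> A + b * \<nu> A) = a * x \<mu> + b * x \<nu>) \<and>
     (\<exists>C. \<forall>\<mu>\<in>ca M \<P>. \<bar>x \<mu>\<bar> \<le> C * tv_norm M \<mu>)}"

definition polar :: "'a measure \<Rightarrow> 'a measure set \<Rightarrow> 'a set \<Rightarrow> bool" where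
  "polar M \<P> S \<longleftrightarrow> (\<exists>N\<in>sets M. S \<subseteq> N \<and> (\<forall>P\<in>\<P>. emeasure P N = 0))"

definition in_Linf :: "'a measure \<Rightarrow> 'a measure set \<Rightarrow> ('a \<Rightarrow> real) \<Rightarrow> bool" where
  "in_Linf M \<P> h \<longleftrightarrow> h \<in> borel_measurable M \<and>
     (\<exists>C. polar M \<P> {\<omega>\<in>space M. \<bar>h \<omega>\<bar> > C})"

definition represents :: "'a measure \<Rightarrow> 'a measure set \<Rightarrow> (('a set \<Rightarrow> real) \<Rightarrow> real) \<Rightarrow> ('a \<Rightarrow> real) \<Rightarrow> bool" where
  "represents M \<P> x h \<longleftrightarrow> h \<in> borel_measurable M \<and>
     (\<forall>\<mu>\<in>ca M \<P>. signed_integrable M \<mu> h \<and> x \<mu> = signed_integral M \<mu> h)"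

end

theory Submission imports Defs begin

text \<open>Every P in the family, and each restriction P(A \<inter> -) of it, is a positive element of
  ca(P) whose total variation norm is P(A), and on it the representation of x' reads
  x'(P(A \<inter> -)) = integral of h over A w.r.t. P. So h is P-integrable with all its set
  integrals prescribed by x', which makes h unique P-a.e.; and the bound |x'(mu)| \<le> C |mu|
  turns into |integral of h over A| \<le> C P(A) for every A, i.e. |h| \<le> C P-a.e. A measurable
  set that is P-null for every P in the family is polar.\<close>

lemma tv_finite_measure:
  assumes "finite_measure D" and sets_D: "sets D = sets M" and B: "B \<in> sets M"
  shows "tv M (measure D) B = measure D B"
proof -
  interpret finite_measure D by fact
  let ?S = "{(\<Sum>E\<in>C. \<bar>measure D E\<bar>) | C. finite C \<and> C \<subseteq> sets M \<and> disjoint C \<and> \<Union>C \<subseteq> B}"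
  have "measure D B \<in> ?S"
    by (rule CollectI, rule exI[of _ "{B}"]) (auto simp: B disjoint_def)
  moreover have "s \<le> measure D B" if "s \<in> ?S" for s
  proof -
    from that obtain C where C: "finite C" "C \<subseteq> sets M" "disjoint C" "\<Union>C \<subseteq> B"
      and s: "s = (\<Sum>E\<in>C. \<bar>measure D E\<bar>)" by blast
    have "s = (\<Sum>E\<in>C. measure D E)" using s by simp
    also have "\<dots> = measure D (\<Union>E\<in>C. E)"
      using C sets_D by (intro finite_measure_finite_Union[symmetric])
        (auto simp: disjoint_family_on_def disjoint_def)
    also have "\<dots> \<le> measure D B"
      using C sets_D B by (intro finite_measure_mono) auto
    finally show ?thesis .
  qed
  ultimately show ?thesis unfolding tv_def by (intro cSup_eq_maximum) auto
qed

lemma pos_part_finite_measure: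
  assumes "finite_measure D" and sets_D: "sets D = sets M"
  shows "pos_part M (measure D) = D"
proof -
  interpret finite_measure D by fact
  have "pos_part M (measure D) = measure_of (space M) (sets M) (emeasure D)"
    unfolding pos_part_def
  proof (rule measure_of_eq)
    show "sets M \<subseteq> Pow (space M)" using sets.space_closed by auto
    fix A assume "A \<in> sigma_sets (space M) (sets M)"
    then have "A \<in> sets M" by (simp add: sets.sigma_sets_eq)
    then show "ennreal ((tv M (measure D) A + measure D A) / 2) = emeasure D A"
      using tv_finite_measure[OF \<open>finite_measure D\<close> sets_D] by (simp add: emeasure_eq_measure)
  qed
  then show ?thesis
    using measure_of_of_measure[of D] by (simp add: sets_D sets_eq_imp_space_eq[OF sets_D])
qed

lemma neg_part_finite_measure:
  assumes "finite_measure D" and sets_D: "sets D = sets M"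
  shows "neg_part M (measure D) = null_measure D"
proof -
  have "neg_part M (measure D) = measure_of (space M) (sets M) (emeasure (null_measure D))"
    unfolding neg_part_def
  proof (rule measure_of_eq)
    show "sets M \<subseteq> Pow (space M)" using sets.space_closed by auto
    fix A assume "A \<in> sigma_sets (space M) (sets M)"
    then have "A \<in> sets M" by (simp add: sets.sigma_sets_eq)
    then show "ennreal ((tv M (measure D) A - measure D A) / 2) = emeasure (null_measure D) A"
      using tv_finite_measure[OF assms] by simp
  qed
  then show ?thesis
    using measure_of_of_measure[of "null_measure D"]
    by (simp add: sets_D sets_eq_imp_space_eq[OF sets_D])
qed

lemma signed_integral_finite_measure:
  assumes "finite_measure D" and "sets D = sets M"
    and "signed_integrable M (measure D) h"
  shows "integrable D h" and "signed_integral M (measure D) h = integral\<^sup>L D h"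
  using assms unfolding signed_integrable_def signed_integral_def
  by (simp_all add: pos_part_finite_measure neg_part_finite_measure)

lemma finite_measure_in_ca:
  assumes "finite_measure D" and sets_D: "sets D = sets M"
    and "P \<in> \<P>" and sets_P: "sets P = sets M" and "absolutely_continuous P D"
  shows "measure D \<in> ca M \<P>"
proof -
  interpret finite_measure D by fact
  have "finite_signed_measure M (measure D)"
    unfolding finite_signed_measure_def
    using finite_measure_UNION sets_D by (auto simp: measure_notin_sets)
  moreover have "tv M (measure D) A = 0" if "A \<in> sets M" "emeasure P A = 0" for A
  proof -
    have "A \<in> null_sets P" using that sets_P by (simp add: null_sets_def)
    then have "A \<in> null_sets D"
      using \<open>absolutely_continuous P D\<close> by (auto simp: absolutely_continuous_def)
    then show ?thesis
      using tv_finite_measure[OF \<open>finite_measure D\<close> sets_D \<open>A \<in> sets M\<close>]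
      by (simp add: measure_def null_sets_def)
  qed
  ultimately show ?thesis unfolding ca_def using \<open>P \<in> \<P>\<close> by blast
qed

lemma tv_norm_restricted:
  assumes "finite_measure P" and sets_P: "sets P = sets M" and "A \<in> sets M"
  shows "tv_norm M (measure (density P (indicator A))) = measure P A"
proof -
  have "A \<in> sets P" using assms by simp
  then have "finite_measure (density P (indicator A))"
    using \<open>finite_measure P\<close> by (intro finite_measure.finite_measure_restricted)
  then show ?thesis
    unfolding tv_norm_def using tv_finite_measure[OF _ _ sets.top[of M]] \<open>A \<in> sets P\<close>
    by (simp add: measure_restricted sets_P sets_eq_imp_space_eq[OF sets_P, symmetric] flip: sets_P)
qed

lemma restricted_in_ca:
  assumes "finite_measure P" and "P \<in> \<P>" and sets_P: "sets P = sets M" and "A \<in> sets M"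
  shows "measure (density P (indicator A)) \<in> ca M \<P>"
proof (rule finite_measure_in_ca[OF _ _ \<open>P \<in> \<P>\<close> sets_P])
  show "finite_measure (density P (indicator A))"
    using assms by (intro finite_measure.finite_measure_restricted) auto
  show "absolutely_continuous P (density P (indicator A))"
    using assms by (intro absolutely_continuousI_density) auto
qed (simp add: sets_P)

lemma represents_integrable:
  assumes "represents M \<P> x h"
    and "finite_measure P" and "P \<in> \<P>" and sets_P: "sets P = sets M"
  shows "integrable P h"
proof (rule signed_integral_finite_measure(1)[OF \<open>finite_measure P\<close> sets_P])
  have "measure P \<in> ca M \<P>"
    using finite_measure_in_ca[OF \<open>finite_measure P\<close> sets_P \<open>P \<in> \<P>\<close> sets_P]
    by (simp add: absolutely_continuous_def)
  then show "signed_integrable M (measure P) h"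
    using \<open>represents M \<P> x h\<close> unfolding represents_def by blast
qed

lemma represents_set_integral:
  assumes rep: "represents M \<P> x h"
    and "finite_measure P" and "P \<in> \<P>" and sets_P: "sets P = sets M" and "A \<in> sets M"
  shows "x (measure (density P (indicator A))) = (\<integral>\<omega>\<in>A. h \<omega> \<partial>P)"
proof -
  let ?D = "density P (indicator A)"
  have A: "A \<in> sets P" using assms by simp
  have h: "h \<in> borel_measurable P"
    using rep measurable_cong_sets[OF sets_P refl] unfolding represents_def by blast
  have fin: "finite_measure ?D"
    using \<open>finite_measure P\<close> A by (intro finite_measure.finite_measure_restricted)
  have "signed_integrable M (measure ?D) h" "x (measure ?D) = signed_integral M (measure ?D) h"
    using rep restricted_in_ca[OF assms(2-5)] unfolding represents_def by auto
  moreover have "integral\<^sup>L ?D h = (\<integral>\<omega>\<in>A. h \<omega> \<partial>P)"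
    using integral_density[OF h, of "indicator A"] A
    by (simp add: ennreal_indicator set_lebesgue_integral_def)
  ultimately show ?thesis
    using signed_integral_finite_measure(2)[OF fin] sets_P by simp
qed

lemma (in finite_measure) AE_le_if_set_integral_le:
  fixes f :: "'a \<Rightarrow> real"
  assumes f: "integrable M f"
    and le: "\<And>A. A \<in> sets M \<Longrightarrow> (\<integral>\<omega>\<in>A. f \<omega> \<partial>M) \<le> c * measure M A"
  shows "AE \<omega> in M. f \<omega> \<le> c"
proof -
  define A where "A = {\<omega>\<in>space M. c < f \<omega>}"
  have [measurable]: "A \<in> sets M" using f unfolding A_def by measurable
  have g: "integrable M (\<lambda>\<omega>. f \<omega> - c)" using f by simp
  have "set_integrable M A f" "set_integrable M A (\<lambda>_. c)"
    unfolding set_integrable_def using f by (intro integrable_mult_indicator; simp)+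
  then have "(\<integral>\<omega>\<in>A. (f \<omega> - c) \<partial>M) = (\<integral>\<omega>\<in>A. f \<omega> \<partial>M) - c * measure M A"
    by (simp add: set_integral_const)
  also have "\<dots> \<le> 0" using le by simp
  finally have "(\<integral>\<omega>\<in>A. (f \<omega> - c) \<partial>M) = 0"
    unfolding set_lebesgue_integral_def
    by (intro antisym integral_nonneg) (auto simp: A_def indicator_def)
  then have "A \<in> null_sets M"
    by (intro null_if_pos_func_has_zero_int[OF g \<open>A \<in> sets M\<close>]) (auto simp: A_def)
  then show ?thesis
    by (rule AE_not_in[THEN AE_mp]) (auto simp: A_def)
qed

lemma represents_AE_unique:
  assumes "represents M \<P> x g" and "represents M \<P> x h"
    and "finite_measure P" and "P \<in> \<P>" and "sets P = sets M"
  shows "AE \<omega> in P. g \<omega> = h \<omega>"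
  using assms represents_set_integral[OF assms(1)] represents_set_integral[OF assms(2)]
  by (intro density_unique_real represents_integrable) auto

lemma represents_AE_bounded:
  assumes rep: "represents M \<P> x h"
    and bound: "\<And>\<mu>. \<mu> \<in> ca M \<P> \<Longrightarrow> \<bar>x \<mu>\<bar> \<le> C * tv_norm M \<mu>"
    and "finite_measure P" and "P \<in> \<P>" and sets_P: "sets P = sets M"
  shows "AE \<omega> in P. \<bar>h \<omega>\<bar> \<le> C"
proof -
  interpret finite_measure P by fact
  have h: "integrable P h" using represents_integrable assms by blast
  have abs_set_integral_le: "\<bar>\<integral>\<omega>\<in>A. h \<omega> \<partial>P\<bar> \<le> C * measure P A" if "A \<in> sets P" for A
  proof -
    have A: "A \<in> sets M" using that sets_P by simp
    show ?thesis
      using bound[OF restricted_in_ca[OF assms(3-5) A]] represents_set_integral[OF rep assms(3-5) A]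
        tv_norm_restricted[OF assms(3,5) A] by simp
  qed
  have "set_integrable P A h" if "A \<in> sets P" for A
    unfolding set_integrable_def using that h by (rule integrable_mult_indicator)
  then have "(\<integral>\<omega>\<in>A. - h \<omega> \<partial>P) \<le> C * measure P A" if "A \<in> sets P" for A
    using abs_set_integral_le[OF that] that by (simp add: set_integral_uminus)
  moreover have "(\<integral>\<omega>\<in>A. h \<omega> \<partial>P) \<le> C * measure P A" if "A \<in> sets P" for A
    using abs_set_integral_le[OF that] by simp
  ultimately have "AE \<omega> in P. h \<omega> \<le> C" "AE \<omega> in P. - h \<omega> \<le> C"
    using h by (auto intro!: AE_le_if_set_integral_le)
  then show ?thesis by eventually_elim simp
qed

lemma polar_if_AE:
  assumes "{\<omega>\<in>space M. \<not> Q \<omega>} \<in> sets M"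
    and "\<And>P. P \<in> \<P> \<Longrightarrow> sets P = sets M \<and> (AE \<omega> in P. Q \<omega>)"
  shows "polar M \<P> {\<omega>\<in>space M. \<not> Q \<omega>}"
  unfolding polar_def
proof (intro bexI conjI ballI)
  fix P assume "P \<in> \<P>"
  with assms show "emeasure P {\<omega>\<in>space M. \<not> Q \<omega>} = 0"
    using AE_iff_measurable[of _ P Q] sets_eq_imp_space_eq by metis
qed (use assms in auto)

theorem lemma3p17:
  fixes M :: "'a measure" and \<P> :: "'a measure set"
    and x :: "('a set \<Rightarrow> real) \<Rightarrow> real" and h :: "'a \<Rightarrow> real"
  assumes "convex_prob_family M \<P>"
    and "x \<in> ca_dual M \<P>"
    and "represents M \<P> x h"
  shows "(\<forall>g. represents M \<P> x g \<longrightarrow> polar M \<P> {\<omega>\<in>space M. g \<omega> \<noteq> h \<omega>})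
         \<and> in_Linf M \<P> h"
proof -
  have family: "finite_measure P" "sets P = sets M" if "P \<in> \<P>" for P
    using assms(1) that unfolding convex_prob_family_def by (auto simp: prob_space_def)
  have h[measurable]: "h \<in> borel_measurable M" using assms(3) unfolding represents_def by simp
  obtain C where C: "\<And>\<mu>. \<mu> \<in> ca M \<P> \<Longrightarrow> \<bar>x \<mu>\<bar> \<le> C * tv_norm M \<mu>"
    using assms(2) unfolding ca_dual_def by blast
  have unique: "polar M \<P> {\<omega>\<in>space M. g \<omega> \<noteq> h \<omega>}" if g: "represents M \<P> x g" for g
  proof (rule polar_if_AE)
    have [measurable]: "g \<in> borel_measurable M" using g unfolding represents_def by simp
    show "{\<omega>\<in>space M. g \<omega> \<noteq> h \<omega>} \<in> sets M" by measurable
  qed (use family represents_AE_unique[OF g assms(3)] in blast)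
  have bounded: "polar M \<P> {\<omega>\<in>space M. \<not> \<bar>h \<omega>\<bar> \<le> C}"
    by (rule polar_if_AE) (use family represents_AE_bounded[OF assms(3) C] in auto)
  show ?thesis
    unfolding in_Linf_def using unique bounded[unfolded not_le] h by blast
qed

end
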